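(* Let $\epsilon>0$, $q>0$, and let $\Lambda_\epsilon$ be an $\epsilon$-lattice under the $\ell_2$ norm. For any $\mathbf{x}\in\mathbb{R}^d$ and $\boldsymbol\lambda\in\Lambda_\epsilon$, the points $\boldsymbol\lambda+\mathbf{x}$ and $\boldsymbol\lambda-\mathbf{x}$ are contained in the same number of expanded Voronoi regions $\mathbf{Vor}^+(\boldsymbol\lambda')$, $\boldsymbol\lambda'\in\Lambda_\epsilon$.
   Context: A lattice is the set of integer combinations of a basis of $\mathbb{R}^d$. Under $\ell_2$, its packing radius $r_p$ is the supremum of $r$ such that balls of radius $r$ around distinct lattice points are disjoint and its cover radius $r_c$ is the infimum of $r$ such that balls of radius $r$ around lattice points cover $\mathbb{R}^d$; an $\epsilon$-lattice has $\epsilon=r_p\le r_c\le3\epsilon$. The Voronoi region of $\boldsymbol\lambda'$ is $\mathbf{Vor}(\boldsymbol\lambda')=\{\mathbf{y}:\|\mathbf{y}-\boldsymbol\lambda'\|_2<\|\mathbf{y}-\boldsymbol\lambda''\|_2\ \forall\boldsymbol\lambda''\in\Lambda_\epsilon\setminus\{\boldsymbol\lambda'\}\}$. The expanded Voronoi region $\mathbf{Vor}^+(\boldsymbol\lambda')$ is the set of points within $\ell_2$ distance $2q\epsilon$ of $\mathbf{Vor}(\boldsymbol\lambda')$. *)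

theory Defs
  imports "HOL-Analysis.Analysis"
begin

definition is_lattice :: "'a::euclidean_space set \<Rightarrow> bool" where
  "is_lattice L \<longleftrightarrow> (\<exists>B. independent B \<and> span B = UNIV \<and>
     L = {(\<Sum>b\<in>B. of_int (c b) *\<^sub>R b) | c. True})"

definition packing_radius :: "'a::euclidean_space set \<Rightarrow> real" where
  "packing_radius L = Sup {r. 0 \<le> r \<and>
     (\<forall>x\<in>L. \<forall>y\<in>L. x \<noteq> y \<longrightarrow> ball x r \<inter> ball y r = {})}"

definition cover_radius :: "'a::euclidean_space set \<Rightarrow> real" where
  "cover_radius L = Inf {r. 0 \<le> r \<and> (\<Union>x\<in>L. cball x r) = UNIV}"

definition eps_lattice :: "real \<Rightarrow> 'a::euclidean_space set \<Rightarrow> bool" where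
  "eps_lattice \<epsilon> L \<longleftrightarrow> is_lattice L \<and> packing_radius L = \<epsilon> \<and>
     \<epsilon> \<le> cover_radius L \<and> cover_radius L \<le> 3 * \<epsilon>"

definition Vor :: "'a::euclidean_space set \<Rightarrow> 'a \<Rightarrow> 'a set" where
  "Vor L l' = {y. \<forall>l''\<in>L - {l'}. dist y l' < dist y l''}"

definition Vor_plus :: "real \<Rightarrow> real \<Rightarrow> 'a::euclidean_space set \<Rightarrow> 'a \<Rightarrow> 'a set" where
  "Vor_plus q \<epsilon> L l' = {y. \<exists>z\<in>Vor L l'. dist y z \<le> 2 * q * \<epsilon>}"

end

theory Submission
  imports Defs
begin

(* The point reflection y \<mapsto> 2\<lambda> - y is an isometry that maps the lattice onto itself
   and swaps \<lambda> + x and \<lambda> - x. Isometries preserving the lattice permute the Voronoi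
   regions, hence also the expanded ones, so the reflection is a bijection between the
   lattice points whose expanded region contains \<lambda> + x and those whose expanded region
   contains \<lambda> - x. *)

lemma lattice_point_reflection:
  assumes "is_lattice L" "l \<in> L" "y \<in> L"
  shows "(2::real) *\<^sub>R l - y \<in> L"
proof -
  obtain B where L: "L = {(\<Sum>b\<in>B. of_int (c b) *\<^sub>R b) | c. True}"
    using assms(1) unfolding is_lattice_def by blast
  obtain c1 where c1: "l = (\<Sum>b\<in>B. of_int (c1 b) *\<^sub>R b)" using assms(2) L by blast
  obtain c2 where c2: "y = (\<Sum>b\<in>B. of_int (c2 b) *\<^sub>R b)" using assms(3) L by blast
  have "(2::real) *\<^sub>R l - y = (\<Sum>b\<in>B. of_int (2 * c1 b - c2 b) *\<^sub>R b)"
    unfolding c1 c2 scaleR_sum_right sum_subtractf[symmetric]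
    by (rule sum.cong) (auto simp: algebra_simps)
  then show ?thesis unfolding L by (auto intro!: exI[of _ "\<lambda>b. 2 * c1 b - c2 b"])
qed

lemma Vor_isometry_mem:
  assumes isom: "\<And>a b. dist (f a) (f b) = dist a b"
    and onto: "L \<subseteq> f ` L"
    and y: "y \<in> Vor L l'"
  shows "f y \<in> Vor L (f l')"
  unfolding Vor_def
proof (intro CollectI ballI)
  fix m assume m: "m \<in> L - {f l'}"
  then obtain m0 where m0: "m0 \<in> L" "m = f m0" using onto by blast
  with m have "m0 \<in> L - {l'}" by blast
  then have "dist y l' < dist y m0" using y by (simp add: Vor_def)
  then show "dist (f y) (f l') < dist (f y) m" by (simp add: m0(2) isom)
qed

lemma Vor_plus_isometry_mem:
  assumes isom: "\<And>a b. dist (f a) (f b) = dist a b"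
    and onto: "L \<subseteq> f ` L"
    and y: "y \<in> Vor_plus q \<epsilon> L l'"
  shows "f y \<in> Vor_plus q \<epsilon> L (f l')"
proof -
  obtain z where z: "z \<in> Vor L l'" "dist y z \<le> 2 * q * \<epsilon>"
    using y unfolding Vor_plus_def by blast
  have "f z \<in> Vor L (f l')" using Vor_isometry_mem[OF isom onto z(1)] .
  moreover have "dist (f y) (f z) \<le> 2 * q * \<epsilon>" using z(2) by (simp add: isom)
  ultimately show ?thesis unfolding Vor_plus_def by blast
qed

lemma card_Vor_plus_involution:
  assumes isom: "\<And>a b. dist (f a) (f b) = dist a b"
    and invol: "\<And>y. f (f y) = y"
    and closed: "f ` L \<subseteq> L"
  shows "card {l'\<in>L. f p \<in> Vor_plus q \<epsilon> L l'} = card {l'\<in>L. p \<in> Vor_plus q \<epsilon> L l'}"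
proof -
  have onto: "L \<subseteq> f ` L" using closed invol by (metis image_eqI subset_iff)
  have "{l'\<in>L. f p \<in> Vor_plus q \<epsilon> L l'} = f ` {l'\<in>L. p \<in> Vor_plus q \<epsilon> L l'}"
  proof (intro equalityI subsetI)
    fix m assume "m \<in> {l'\<in>L. f p \<in> Vor_plus q \<epsilon> L l'}"
    then have "m \<in> L" "f p \<in> Vor_plus q \<epsilon> L m" by auto
    then have "f m \<in> {l'\<in>L. p \<in> Vor_plus q \<epsilon> L l'}"
      using Vor_plus_isometry_mem[OF isom onto, of "f p"] closed invol by auto
    then show "m \<in> f ` {l'\<in>L. p \<in> Vor_plus q \<epsilon> L l'}" by (metis image_eqI invol)
  next
    fix m assume "m \<in> f ` {l'\<in>L. p \<in> Vor_plus q \<epsilon> L l'}"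
    then show "m \<in> {l'\<in>L. f p \<in> Vor_plus q \<epsilon> L l'}"
      using Vor_plus_isometry_mem[OF isom onto] closed by auto
  qed
  moreover have "inj f" by (metis invol injI)
  ultimately show ?thesis by (simp add: card_image inj_on_subset)
qed

theorem lemma32:
  fixes L :: "'a::euclidean_space set" and \<epsilon> q :: real and x l :: 'a
  assumes "\<epsilon> > 0" and "q > 0" and "eps_lattice \<epsilon> L" and "l \<in> L"
  shows "card {l'\<in>L. l + x \<in> Vor_plus q \<epsilon> L l'} = card {l'\<in>L. l - x \<in> Vor_plus q \<epsilon> L l'}"
proof -
  define s where "s y = (2::real) *\<^sub>R l - y" for y :: 'a
  have "is_lattice L" using assms(3) unfolding eps_lattice_def by blast
  then have "s ` L \<subseteq> L" using lattice_point_reflection assms(4) by (auto simp: s_def)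
  moreover have "dist (s a) (s b) = dist a b" for a b
    by (simp add: s_def dist_norm norm_minus_commute)
  moreover have "s (s y) = y" for y by (simp add: s_def)
  moreover have "s (l + x) = l - x" by (simp add: s_def scaleR_2)
  ultimately show ?thesis using card_Vor_plus_involution[of s L "l + x" q \<epsilon>] by metis
qed

end
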